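(* Let $k$ be a field of characteristic zero, $\lambda,\mu\in k$, ${\boldsymbol\lambda}=\begin{pmatrix}0&\lambda\\-\lambda&0\end{pmatrix}$ and ${\boldsymbol\mu}=\begin{pmatrix}0&\mu\\-\mu&0\end{pmatrix}$. Then $k_{\boldsymbol\lambda}(x_1,x_2)\cong k_{\boldsymbol\mu}(x_1,x_2)$ as Poisson algebras if and only if $\lambda=\pm\mu$.
   Context: For antisymmetric ${\boldsymbol\lambda}\in M_n(k)$, $k_{\boldsymbol\lambda}(x_1,\dots,x_n)$ is the rational function field $k(x_1,\dots,x_n)$ with the unique Poisson bracket satisfying $\{x_i,x_j\}=\lambda_{ij}x_ix_j$. *)

theory Defs
  imports "HOL-Computational_Algebra.Polynomial" "HOL-Computational_Algebra.Fraction_Field"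
begin

text \<open>The rational function field k(x1,x2) is the fraction field of k[x1][x2].\<close>
type_synonym 'a ratfun2 = "'a poly poly fract"

definition kconst :: "'a::idom \<Rightarrow> 'a ratfun2" where
  "kconst c = Fract ([:[:c:]:]) 1"

definition X1 :: "'a::idom ratfun2" where
  "X1 = Fract ([:[:0, 1:]:]) 1"

definition X2 :: "'a::idom ratfun2" where
  "X2 = Fract ([:0, 1:]) 1"

definition poisson_bracket :: "('a::field ratfun2 \<Rightarrow> 'a ratfun2 \<Rightarrow> 'a ratfun2) \<Rightarrow> bool" where
  "poisson_bracket B \<longleftrightarrow>
     (\<forall>a b c. B (a + b) c = B a c + B b c) \<and>
     (\<forall>r a b. B (kconst r * a) b = kconst r * B a b) \<and>
     (\<forall>a b. B a b = - B b a) \<and>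
     (\<forall>a b c. B a (B b c) + B b (B c a) + B c (B a b) = 0) \<and>
     (\<forall>a b c. B (a * b) c = a * B b c + B a c * b)"

text \<open>The Poisson bracket of k_lambda(x1,x2) for the antisymmetric matrix
  ((0, l), (-l, 0)): the (unique) Poisson bracket with {x1,x2} = l x1 x2.\<close>
definition quantum_bracket :: "'a::field \<Rightarrow> ('a ratfun2 \<Rightarrow> 'a ratfun2 \<Rightarrow> 'a ratfun2) \<Rightarrow> bool" where
  "quantum_bracket l B \<longleftrightarrow> poisson_bracket B \<and> B X1 X2 = kconst l * X1 * X2"

definition poisson_iso ::
  "('a::field ratfun2 \<Rightarrow> 'a ratfun2 \<Rightarrow> 'a ratfun2) \<Rightarrow> ('a ratfun2 \<Rightarrow> 'a ratfun2 \<Rightarrow> 'a ratfun2)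
    \<Rightarrow> ('a ratfun2 \<Rightarrow> 'a ratfun2) \<Rightarrow> bool" where
  "poisson_iso B C \<phi> \<longleftrightarrow>
     bij \<phi> \<and>
     (\<forall>a b. \<phi> (a + b) = \<phi> a + \<phi> b) \<and>
     (\<forall>a b. \<phi> (a * b) = \<phi> a * \<phi> b) \<and>
     \<phi> 1 = 1 \<and>
     (\<forall>r a. \<phi> (kconst r * a) = kconst r * \<phi> a) \<and>
     (\<forall>a b. \<phi> (B a b) = C (\<phi> a) (\<phi> b))"

end

theory Submission
  imports Defs "HOL-Library.Product_Lexorder" "HOL-Library.Product_Plus"
begin

text \<open>If \<open>l = m\<close> the two brackets coincide, since a Poisson bracket on \<open>k(x\<^sub>1, x\<^sub>2)\<close> is
  determined by \<open>{x\<^sub>1, x\<^sub>2}\<close>; if \<open>l = -m\<close>, exchanging \<open>x\<^sub>1\<close> and \<open>x\<^sub>2\<close> is an isomorphism.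
  Conversely, an isomorphism sends \<open>x\<^sub>1\<close>, \<open>x\<^sub>2\<close> to nonzero \<open>u\<close>, \<open>v\<close> with \<open>{u, v}\<^sub>m = l u v\<close>.
  Ordering the monomials \<open>x\<^sub>1\<^sup>i x\<^sub>2\<^sup>n\<close> lexicographically by \<open>(n, i)\<close> gives a valuation on
  \<open>k(x\<^sub>1, x\<^sub>2)\<close>. The log-canonical bracket satisfies \<open>val {f, g} \<ge> val f + val g\<close>, and the
  bracket of two Laurent monomials with exponents \<open>(n, i)\<close> and \<open>(n', i')\<close> is \<open>m (i n' - n i')\<close>
  times their product. Comparing the lowest terms of \<open>{u, v}\<^sub>m\<close> and \<open>l u v\<close> therefore gives
  \<open>l \<in> m \<int>\<close>; by symmetry \<open>m \<in> l \<int>\<close>, so \<open>l = \<plusminus>m\<close>.\<close>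

section \<open>The lexicographic valuation on bivariate polynomials\<close>

lemma lex_add_mono:
  fixes a b c d :: "'a::linordered_cancel_ab_semigroup_add \<times> 'b::linordered_cancel_ab_semigroup_add"
  shows "a \<le> b \<Longrightarrow> c \<le> d \<Longrightarrow> a + c \<le> b + d"
  by (cases a; cases b; cases c; cases d) (auto simp: add_less_le_mono add_le_less_mono add_mono)

lemma lex_add_less_le_mono:
  fixes a b c d :: "'a::linordered_cancel_ab_semigroup_add \<times> 'b::linordered_cancel_ab_semigroup_add"
  shows "a < b \<Longrightarrow> c \<le> d \<Longrightarrow> a + c < b + d"
  by (cases a; cases b; cases c; cases d) (auto simp: order_le_less add_strict_mono add_less_mono1 add_less_mono)

lemma lex_add_eq_imp_eq:
  fixes a b x y :: "'a::linordered_cancel_ab_semigroup_add \<times> 'b::linordered_cancel_ab_semigroup_add"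
  assumes "a \<le> x" "b \<le> y" "x + y = a + b"
  shows "x = a" "y = b"
  using lex_add_less_le_mono[of a x b y] lex_add_less_le_mono[of b y a x] assms
  by (auto simp: add.commute order.order_iff_strict)

lemma lex_less_iff_succ_le: "(a::int \<times> int) < b \<longleftrightarrow> a + (0, 1) \<le> b"
  by (cases a; cases b) auto

lemma lex_le_diff_iff: "(w::int \<times> int) \<le> a - b \<longleftrightarrow> w + b \<le> a"
  by (cases w; cases a; cases b) auto

text \<open>An exponent pair \<open>(n, i)\<close> stands for the monomial \<open>x\<^sub>1\<^sup>i x\<^sub>2\<^sup>n\<close>: the outer
  polynomial variable of \<^typ>\<open>'a poly poly\<close> is \<open>x\<^sub>2\<close>.\<close>

definition coeff2 :: "'a::zero poly poly \<Rightarrow> nat \<times> nat \<Rightarrow> 'a" where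
  "coeff2 P x = coeff (coeff P (fst x)) (snd x)"

definition support2 :: "'a::zero poly poly \<Rightarrow> (nat \<times> nat) set" where
  "support2 P = {x. coeff2 P x \<noteq> 0}"

definition monom2 :: "'a::zero \<Rightarrow> nat \<times> nat \<Rightarrow> 'a poly poly" where
  "monom2 c x = monom (monom c (snd x)) (fst x)"

definition lowest_exp :: "'a::zero poly poly \<Rightarrow> nat \<times> nat" where
  "lowest_exp P = Min (support2 P)"

definition lowest_coeff :: "'a::zero poly poly \<Rightarrow> 'a" where
  "lowest_coeff P = coeff2 P (lowest_exp P)"

definition int_pair :: "nat \<times> nat \<Rightarrow> int \<times> int" where
  "int_pair x = (int (fst x), int (snd x))"

definition pval :: "'a::zero poly poly \<Rightarrow> int \<times> int" where
  "pval P = int_pair (lowest_exp P)"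

definition pval_ge :: "'a::zero poly poly \<Rightarrow> int \<times> int \<Rightarrow> bool" where
  "pval_ge P w \<longleftrightarrow> (\<forall>x\<in>support2 P. w \<le> int_pair x)"

lemma int_pair_le_iff [simp]: "int_pair x \<le> int_pair y \<longleftrightarrow> x \<le> y"
  by (cases x; cases y) (auto simp: int_pair_def)

lemma int_pair_eq_iff [simp]: "int_pair x = int_pair y \<longleftrightarrow> x = y"
  by (cases x; cases y) (auto simp: int_pair_def)

lemma int_pair_add: "int_pair (x + y) = int_pair x + int_pair y"
  by (cases x; cases y) (simp add: int_pair_def)

lemma poly2_eqI: "(\<And>x. coeff2 P x = coeff2 Q x) \<Longrightarrow> P = Q"
  by (intro poly_eqI) (metis coeff2_def fst_conv snd_conv)

lemma coeff2_0 [simp]: "coeff2 0 x = 0"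
  by (simp add: coeff2_def)

lemma coeff2_add [simp]: "coeff2 (P + Q) x = coeff2 P x + coeff2 Q x"
  by (simp add: coeff2_def)

lemma coeff2_minus [simp]: "coeff2 (- P) x = - coeff2 P x"
  by (simp add: coeff2_def)

lemma coeff2_diff [simp]: "coeff2 (P - Q) x = coeff2 P x - coeff2 Q x"
  by (simp add: coeff2_def)

lemma coeff2_sum: "coeff2 (sum f A) x = (\<Sum>a\<in>A. coeff2 (f a) x)"
  by (simp add: coeff2_def coeff_sum)

lemma coeff2_monom2: "coeff2 (monom2 c x) y = (if y = x then c else 0)"
  by (cases x; cases y) (auto simp: coeff2_def monom2_def)

lemma coeff2_mult:
  "coeff2 (P * Q) x = (\<Sum>y\<in>{..fst x} \<times> {..snd x}. coeff2 P y * coeff2 Q (x - y))"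
  by (cases x) (simp add: coeff2_def coeff_mult coeff_sum sum.cartesian_product case_prod_beta)

lemma finite_support2: "finite (support2 P)"
proof -
  have "support2 P \<subseteq> (SIGMA n:{..degree P}. {..degree (coeff P n)})"
    by (auto simp: support2_def coeff2_def intro: le_degree)
  then show ?thesis by (rule finite_subset) auto
qed

lemma support2_eq_empty_iff [simp]: "support2 P = {} \<longleftrightarrow> P = 0"
  by (auto simp: support2_def intro: poly2_eqI)

lemma lowest_exp_in_support2: "P \<noteq> 0 \<Longrightarrow> lowest_exp P \<in> support2 P"
  unfolding lowest_exp_def using finite_support2 by (intro Min_in) auto

lemma lowest_coeff_nonzero: "P \<noteq> 0 \<Longrightarrow> lowest_coeff P \<noteq> 0"
  using lowest_exp_in_support2 by (auto simp: lowest_coeff_def support2_def)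

lemma lowest_exp_le: "x \<in> support2 P \<Longrightarrow> lowest_exp P \<le> x"
  unfolding lowest_exp_def using finite_support2 by (intro Min_le)

lemma pval_ge_iff: "pval_ge P w \<longleftrightarrow> P = 0 \<or> w \<le> pval P"
proof (cases "P = 0")
  case False
  then show ?thesis
    using lowest_exp_in_support2[OF False] lowest_exp_le[of _ P]
    unfolding pval_ge_def pval_def by (metis int_pair_le_iff order_trans)
qed (simp add: pval_ge_def support2_def)

lemma pval_ge_pval: "pval_ge P (pval P)"
  by (simp add: pval_ge_iff)

lemma pval_ge_add: "pval_ge P w \<Longrightarrow> pval_ge Q w \<Longrightarrow> pval_ge (P + Q) w"
  unfolding pval_ge_def support2_def by clarsimp (metis add.right_neutral)

lemma pval_ge_minus: "pval_ge P w \<Longrightarrow> pval_ge (- P) w"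
  by (auto simp: pval_ge_def support2_def)

lemma nat_pair_add_diff: "y \<in> {..fst x} \<times> {..snd x} \<Longrightarrow> y + (x - y) = (x::nat \<times> nat)"
  by (cases x; cases y) auto

lemma coeff2_mult_nonzeroE:
  fixes P Q :: "'a::idom poly poly"
  assumes "coeff2 (P * Q) x \<noteq> 0"
  obtains y z where "x = y + z" "y \<in> support2 P" "z \<in> support2 Q"
proof -
  obtain y where "y \<in> {..fst x} \<times> {..snd x}" "coeff2 P y * coeff2 Q (x - y) \<noteq> 0"
    using assms unfolding coeff2_mult by (meson sum.not_neutral_contains_not_neutral)
  then show thesis
    by (intro that[of y "x - y"]) (auto simp: support2_def nat_pair_add_diff)
qed

lemma pval_ge_mult:
  fixes P Q :: "'a::idom poly poly"
  assumes "pval_ge P a" "pval_ge Q b"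
  shows "pval_ge (P * Q) (a + b)"
  unfolding pval_ge_def
proof
  fix x assume "x \<in> support2 (P * Q)"
  then obtain y z where "x = y + z" "y \<in> support2 P" "z \<in> support2 Q"
    by (auto simp: support2_def elim: coeff2_mult_nonzeroE)
  then show "a + b \<le> int_pair x"
    using assms by (auto simp: pval_ge_def int_pair_add intro: lex_add_mono)
qed

lemma coeff2_mult_lowest_exp:
  fixes P Q :: "'a::idom poly poly"
  assumes "P \<noteq> 0" "Q \<noteq> 0"
  shows "coeff2 (P * Q) (lowest_exp P + lowest_exp Q) = lowest_coeff P * lowest_coeff Q"
proof -
  let ?e = "lowest_exp P + lowest_exp Q"
  have only_lowest: "coeff2 P y * coeff2 Q (?e - y) = 0"
    if "y \<in> {..fst ?e} \<times> {..snd ?e}" "y \<noteq> lowest_exp P" for y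
  proof (rule ccontr)
    assume "coeff2 P y * coeff2 Q (?e - y) \<noteq> 0"
    then have "lowest_exp P \<le> y" "lowest_exp Q \<le> ?e - y"
      by (auto simp: support2_def intro!: lowest_exp_le)
    with that show False
      using lex_add_eq_imp_eq(1) nat_pair_add_diff by metis
  qed
  have "lowest_exp P \<in> {..fst ?e} \<times> {..snd ?e}"
    by (cases "lowest_exp P"; cases "lowest_exp Q") auto
  then have "coeff2 (P * Q) ?e = coeff2 P (lowest_exp P) * coeff2 Q (?e - lowest_exp P)"
    unfolding coeff2_mult using only_lowest
    by (subst sum.mono_neutral_right[where S = "{lowest_exp P}"]) auto
  also have "?e - lowest_exp P = lowest_exp Q"
    by (cases "lowest_exp P"; cases "lowest_exp Q") auto
  finally show ?thesis by (simp add: lowest_coeff_def)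
qed

lemma lowest_exp_mult:
  fixes P Q :: "'a::idom poly poly"
  assumes "P \<noteq> 0" "Q \<noteq> 0"
  shows "lowest_exp (P * Q) = lowest_exp P + lowest_exp Q"
proof (rule antisym)
  show "lowest_exp (P * Q) \<le> lowest_exp P + lowest_exp Q"
    using coeff2_mult_lowest_exp[OF assms] lowest_coeff_nonzero[OF assms(1)]
      lowest_coeff_nonzero[OF assms(2)]
    by (intro lowest_exp_le) (simp add: support2_def)
  have "pval_ge (P * Q) (pval P + pval Q)"
    by (intro pval_ge_mult pval_ge_pval)
  then show "lowest_exp P + lowest_exp Q \<le> lowest_exp (P * Q)"
    using assms by (simp add: pval_ge_iff pval_def flip: int_pair_add)
qed

lemma pval_mult:
  "(P::'a::idom poly poly) \<noteq> 0 \<Longrightarrow> Q \<noteq> 0 \<Longrightarrow> pval (P * Q) = pval P + pval Q"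
  by (simp add: pval_def lowest_exp_mult int_pair_add)

lemma pval_ge_diff_lowest_term:
  fixes P :: "'a::idom poly poly"
  assumes "P \<noteq> 0"
  shows "pval_ge (P - monom2 (lowest_coeff P) (lowest_exp P)) (pval P + (0, 1))"
  unfolding pval_ge_def
proof
  fix x assume x: "x \<in> support2 (P - monom2 (lowest_coeff P) (lowest_exp P))"
  then have "x \<noteq> lowest_exp P" "x \<in> support2 P"
    by (auto simp: support2_def coeff2_monom2 lowest_coeff_def split: if_splits)
  then have "pval P < int_pair x"
    using lowest_exp_le[of x P] by (simp add: pval_def order.strict_iff_order)
  then show "pval P + (0, 1) \<le> int_pair x"
    by (simp add: lex_less_iff_succ_le)
qed

lemma monom2_eq_0_iff [simp]: "monom2 c x = 0 \<longleftrightarrow> c = 0"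
  by (simp add: monom2_def)

lemma support2_monom2: "support2 (monom2 c x) = (if c = 0 then {} else {x})"
  by (auto simp: support2_def coeff2_monom2)

lemma pval_monom2: "c \<noteq> 0 \<Longrightarrow> pval (monom2 c x) = int_pair x"
  by (simp add: pval_def lowest_exp_def support2_monom2)

lemma monom2_1_0: "monom2 1 (0, 0) = 1"
  by (simp add: monom2_def monom_0 one_pCons)

lemma pval_1 [simp]: "pval (1 :: 'a::comm_semiring_1 poly poly) = 0"
  using pval_monom2[of "1::'a" "(0, 0)"] by (simp add: monom2_1_0 int_pair_def zero_prod_def)

lemma poly2_eq_sum_monom2: "P = (\<Sum>x\<in>support2 P. monom2 (coeff2 P x) x)"
proof (rule poly2_eqI)
  fix y
  have "coeff2 (\<Sum>x\<in>support2 P. monom2 (coeff2 P x) x) y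
      = (\<Sum>x\<in>support2 P. if y = x then coeff2 P x else 0)"
    by (simp add: coeff2_sum coeff2_monom2)
  also have "\<dots> = coeff2 P y"
    using finite_support2[of P] by (simp add: support2_def)
  finally show "coeff2 P y = coeff2 (\<Sum>x\<in>support2 P. monom2 (coeff2 P x) x) y" ..
qed

lemma monom2_eq_mult:
  "monom2 (c::'a::comm_ring_1) x = [:[:c:]:] * [:[:0, 1:]:] ^ snd x * [:0, 1:] ^ fst x"
proof -
  have "[:[:0, 1:]:] ^ snd x = [:monom (1::'a) (snd x):]"
    by (simp add: poly_const_pow monom_altdef)
  moreover have "[:0, 1:] ^ fst x = monom (1 :: 'a poly) (fst x)"
    by (simp add: monom_altdef)
  ultimately show ?thesis
    by (simp add: monom2_def smult_monom monom_altdef)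
qed

section \<open>The valuation on the rational function field\<close>

definition of_poly2 :: "'a::idom poly poly \<Rightarrow> 'a ratfun2" where
  "of_poly2 P = Fract P 1"

lemma of_poly2_0 [simp]: "of_poly2 0 = 0"
  by (simp add: of_poly2_def fract_collapse)

lemma of_poly2_1 [simp]: "of_poly2 1 = 1"
  by (simp add: of_poly2_def fract_collapse)

lemma of_poly2_add [simp]: "of_poly2 (P + Q) = of_poly2 P + of_poly2 Q"
  by (simp add: of_poly2_def)

lemma of_poly2_diff [simp]: "of_poly2 (P - Q) = of_poly2 P - of_poly2 Q"
  by (simp add: of_poly2_def)

lemma of_poly2_mult [simp]: "of_poly2 (P * Q) = of_poly2 P * of_poly2 Q"
  by (simp add: of_poly2_def)

lemma of_poly2_power [simp]: "of_poly2 (P ^ n) = of_poly2 P ^ n"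
  by (induct n) simp_all

lemma of_poly2_sum: "of_poly2 (sum f A) = (\<Sum>x\<in>A. of_poly2 (f x))"
  by (induct A rule: infinite_finite_induct) simp_all

lemma of_poly2_eq_0_iff [simp]: "of_poly2 P = 0 \<longleftrightarrow> P = 0"
  by (simp add: of_poly2_def Zero_fract_def eq_fract)

lemma Fract_eq_of_poly2_divide: "Q \<noteq> 0 \<Longrightarrow> Fract P Q = of_poly2 P / of_poly2 Q"
  by (simp add: of_poly2_def divide_fract_def)

definition val :: "'a::idom ratfun2 \<Rightarrow> int \<times> int" where
  "val f = (SOME w. \<exists>P Q. P \<noteq> 0 \<and> Q \<noteq> 0 \<and> f = Fract P Q \<and> w = pval P - pval Q)"

definition val_ge :: "'a::idom ratfun2 \<Rightarrow> int \<times> int \<Rightarrow> bool" where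
  "val_ge f w \<longleftrightarrow> f = 0 \<or> w \<le> val f"

lemma val_Fract:
  assumes "P \<noteq> 0" "Q \<noteq> 0"
  shows "val (Fract P Q) = pval P - pval Q"
proof -
  have unique: "w = pval P - pval Q"
    if "P' \<noteq> 0" "Q' \<noteq> 0" "Fract P Q = Fract P' Q'" "w = pval P' - pval Q'" for P' Q' w
  proof -
    have "pval (P * Q') = pval (P' * Q)"
      using that assms by (simp add: eq_fract)
    then have "pval P + pval Q' = (w + pval Q) + pval Q'"
      using that assms by (simp add: pval_mult algebra_simps)
    then show ?thesis
      by (simp add: algebra_simps)
  qed
  show ?thesis
    unfolding val_def by (rule someI2[of _ "pval P - pval Q"]) (use assms unique in blast)+
qed

lemma val_ge_Fract:
  assumes "Q \<noteq> 0"
  shows "val_ge (Fract P Q) w \<longleftrightarrow> pval_ge P (w + pval Q)"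
proof (cases "P = 0")
  case False
  with assms have "Fract P Q \<noteq> 0"
    by (simp add: Zero_fract_def eq_fract)
  with False assms show ?thesis
    by (simp add: val_ge_def pval_ge_iff val_Fract lex_le_diff_iff)
qed (simp add: val_ge_def pval_ge_iff fract_collapse)

lemma val_ge_of_poly2: "val_ge (of_poly2 P) w \<longleftrightarrow> pval_ge P w"
  by (simp add: of_poly2_def val_ge_Fract)

lemma val_ge_0 [simp]: "val_ge 0 w"
  by (simp add: val_ge_def)

lemma val_ge_val: "val_ge f (val f)"
  by (simp add: val_ge_def)

lemma val_ge_mono: "val_ge f w \<Longrightarrow> w' \<le> w \<Longrightarrow> val_ge f w'"
  by (auto simp: val_ge_def)

lemma val_ge_add:
  assumes "val_ge f w" "val_ge g w"
  shows "val_ge (f + g) w"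
proof -
  obtain P Q where f: "f = Fract P Q" "Q \<noteq> 0" by (cases f)
  obtain R S where g: "g = Fract R S" "S \<noteq> 0" by (cases g)
  have "pval_ge P (w + pval Q)" "pval_ge R (w + pval S)"
    using assms f g by (simp_all add: val_ge_Fract)
  then have "pval_ge (P * S) (w + pval Q + pval S)" "pval_ge (R * Q) (w + pval S + pval Q)"
    by (auto intro: pval_ge_mult[OF _ pval_ge_pval])
  then have "pval_ge (P * S + R * Q) (w + pval (Q * S))"
    using f g by (intro pval_ge_add) (simp_all add: pval_mult algebra_simps)
  then show ?thesis
    using f g by (simp add: val_ge_Fract)
qed

lemma val_ge_minus: "val_ge f w \<Longrightarrow> val_ge (- f) w"
  by (cases f) (simp add: val_ge_Fract pval_ge_minus)

lemma val_ge_diff: "val_ge f w \<Longrightarrow> val_ge g w \<Longrightarrow> val_ge (f - g) w"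
  using val_ge_add[of f w "- g"] val_ge_minus[of g w] by simp

lemma val_ge_sum: "(\<And>x. x \<in> A \<Longrightarrow> val_ge (f x) w) \<Longrightarrow> val_ge (sum f A) w"
  by (induct A rule: infinite_finite_induct) (auto intro: val_ge_add)

lemma val_ge_mult:
  assumes "val_ge f a" "val_ge g b"
  shows "val_ge (f * g) (a + b)"
proof -
  obtain P Q where f: "f = Fract P Q" "Q \<noteq> 0" by (cases f)
  obtain R S where g: "g = Fract R S" "S \<noteq> 0" by (cases g)
  have "pval_ge (P * R) (a + pval Q + (b + pval S))"
    using assms f g by (intro pval_ge_mult) (simp_all add: val_ge_Fract)
  then show ?thesis
    using f g by (simp add: val_ge_Fract pval_mult algebra_simps)
qed

lemma val_mult: "f \<noteq> 0 \<Longrightarrow> g \<noteq> 0 \<Longrightarrow> val (f * g) = val f + val g"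
  by (cases f rule: Fract_cases_nonzero; cases g rule: Fract_cases_nonzero)
    (simp_all add: val_Fract pval_mult)

lemma val_inverse: "f \<noteq> 0 \<Longrightarrow> val (inverse f) = - val f"
  by (cases f rule: Fract_cases_nonzero) (simp_all add: val_Fract)

lemma val_divide: "f \<noteq> 0 \<Longrightarrow> g \<noteq> 0 \<Longrightarrow> val (f / g) = val f - val g"
  by (simp add: divide_inverse val_mult val_inverse)

lemma val_ge_divide:
  assumes "val_ge f w" "g \<noteq> 0"
  shows "val_ge (f / g) (w - val g)"
  using val_ge_mult[OF assms(1) val_ge_val[of "inverse g"]] assms(2)
  by (simp add: divide_inverse val_inverse)

lemma not_val_ge_succ: "f \<noteq> 0 \<Longrightarrow> \<not> val_ge f (val f + (0, 1))"
  by (cases "val f") (simp add: val_ge_def)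

lemma val_of_poly2: "P \<noteq> 0 \<Longrightarrow> val (of_poly2 P) = pval P"
  by (simp add: of_poly2_def val_Fract)

lemma kconst_1 [simp]: "kconst 1 = 1"
  by (simp add: kconst_def pCons_one fract_collapse)

lemma kconst_add: "kconst (a + b) = kconst a + kconst b"
  by (simp add: kconst_def)

lemma kconst_mult: "kconst (a * b) = kconst a * kconst b"
  by (simp add: kconst_def)

lemma kconst_minus: "kconst (- a) = - kconst a"
  by (simp add: kconst_def)

lemma kconst_diff: "kconst (a - b) = kconst a - kconst b"
  by (simp add: kconst_def)

lemma kconst_eq_0_iff [simp]: "kconst c = 0 \<longleftrightarrow> c = 0"
  by (simp add: kconst_def Zero_fract_def eq_fract)

lemma kconst_of_int: "kconst (of_int z) = of_int z"
proof -
  have "kconst (of_nat n) = of_nat n" for n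
    by (induct n) (simp_all add: kconst_add)
  then show ?thesis
    by (cases z rule: int_cases) (simp_all add: kconst_minus kconst_diff)
qed

lemma X1_nonzero [simp]: "X1 \<noteq> 0"
  by (simp add: X1_def Zero_fract_def eq_fract)

lemma X2_nonzero [simp]: "X2 \<noteq> 0"
  by (simp add: X2_def Zero_fract_def eq_fract)

definition laurent_monom :: "'a::idom \<Rightarrow> int \<times> int \<Rightarrow> 'a ratfun2" where
  "laurent_monom c w = kconst c * X1 powi snd w * X2 powi fst w"

lemma laurent_monom_0 [simp]: "laurent_monom 0 w = 0"
  by (simp add: laurent_monom_def)

lemma laurent_monom_eq_0_iff [simp]: "laurent_monom c w = 0 \<longleftrightarrow> c = 0"
  by (simp add: laurent_monom_def)

lemma kconst_eq_laurent_monom: "kconst c = laurent_monom c 0"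
  by (simp add: laurent_monom_def)

lemma kconst_mult_laurent_monom: "kconst a * laurent_monom c w = laurent_monom (a * c) w"
  by (simp add: laurent_monom_def kconst_mult mult.assoc)

lemma laurent_monom_diff: "laurent_monom c w - laurent_monom d w = laurent_monom (c - d) w"
  by (simp add: laurent_monom_def kconst_diff algebra_simps)

lemma laurent_monom_mult:
  "laurent_monom c v * laurent_monom d w = laurent_monom (c * d) (v + w)"
  by (simp add: laurent_monom_def kconst_mult power_int_add)

lemma of_poly2_monom2: "of_poly2 (monom2 c x) = laurent_monom c (int_pair x)"
  unfolding monom2_eq_mult of_poly2_mult of_poly2_power
  by (simp add: laurent_monom_def int_pair_def kconst_def X1_def X2_def of_poly2_def)

lemma val_laurent_monom:
  assumes "c \<noteq> 0"
  shows "val (laurent_monom c w) = w"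
proof -
  define p where "p = (nat (fst w), nat (snd w))"
  define q where "q = (nat (- fst w), nat (- snd w))"
  have w: "w = int_pair p - int_pair q"
    by (cases w) (simp add: p_def q_def int_pair_def)
  have "laurent_monom c w * laurent_monom 1 (int_pair q) = laurent_monom c (int_pair p)"
    by (simp add: laurent_monom_mult w)
  then have "laurent_monom c w = of_poly2 (monom2 c p) / of_poly2 (monom2 1 q)"
    by (simp add: of_poly2_monom2 eq_divide_eq)
  then show ?thesis
    using assms by (simp add: val_divide val_of_poly2 pval_monom2 w)
qed

lemma val_ge_laurent_monom: "val_ge (laurent_monom c w) w"
  by (cases "c = 0") (simp_all add: val_ge_def val_laurent_monom)

lemma of_poly2_eq_sum_laurent_monom:
  "of_poly2 P = (\<Sum>x\<in>support2 P. laurent_monom (coeff2 P x) (int_pair x))"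
  by (subst poly2_eq_sum_monom2) (simp add: of_poly2_sum of_poly2_monom2)

lemma val_ge_of_poly2_diff_lowest:
  assumes "P \<noteq> 0"
  shows "val_ge (of_poly2 P - laurent_monom (lowest_coeff P) (pval P)) (pval P + (0, 1))"
proof -
  have "val_ge (of_poly2 (P - monom2 (lowest_coeff P) (lowest_exp P))) (pval P + (0, 1))"
    unfolding val_ge_of_poly2 using assms by (rule pval_ge_diff_lowest_term)
  then show ?thesis
    by (simp add: of_poly2_monom2 pval_def)
qed

lemma val_ge_diff_lowest_laurent_monom:
  fixes f :: "'a::field ratfun2"
  assumes "f \<noteq> 0"
  obtains c where "c \<noteq> 0" "val_ge (f - laurent_monom c (val f)) (val f + (0, 1))"
proof -
  obtain P Q where PQ: "f = of_poly2 P / of_poly2 Q" "P \<noteq> 0" "Q \<noteq> 0"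
    using assms by (cases f rule: Fract_cases_nonzero) (auto simp: Fract_eq_of_poly2_divide)
  define p q where "p = of_poly2 P" and "q = of_poly2 Q"
  define tP tQ where "tP = laurent_monom (lowest_coeff P) (pval P)"
    and "tQ = laurent_monom (lowest_coeff Q) (pval Q)"
  define c where "c = lowest_coeff P / lowest_coeff Q"
  have nonzero: "q \<noteq> 0" "tQ \<noteq> 0" "c \<noteq> 0"
    using PQ lowest_coeff_nonzero[of P] lowest_coeff_nonzero[of Q] by (simp_all add: q_def tQ_def c_def)
  have val_f: "val f = pval P - pval Q"
    using PQ by (simp add: val_divide val_of_poly2)
  define t where "t = laurent_monom c (val f)"
  have "t * tQ = tP"
    using nonzero by (simp add: t_def tP_def tQ_def laurent_monom_mult c_def val_f)
  then have "f - t = ((p - tP) * tQ - tP * (q - tQ)) / (q * tQ)"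
    using nonzero by (simp add: PQ(1) p_def q_def flip: \<open>t * tQ = tP\<close>) (simp add: field_simps)
  moreover have "val_ge ((p - tP) * tQ - tP * (q - tQ)) (pval P + pval Q + (0, 1))"
  proof (rule val_ge_diff)
    show "val_ge ((p - tP) * tQ) (pval P + pval Q + (0, 1))"
      using val_ge_mult[OF val_ge_of_poly2_diff_lowest[OF PQ(2)],
          OF val_ge_laurent_monom[of "lowest_coeff Q" "pval Q"]]
      by (simp add: p_def tP_def tQ_def add_ac)
    show "val_ge (tP * (q - tQ)) (pval P + pval Q + (0, 1))"
      using val_ge_mult[OF val_ge_laurent_monom[of "lowest_coeff P" "pval P"],
          OF val_ge_of_poly2_diff_lowest[OF PQ(3)]]
      by (simp add: q_def tP_def tQ_def add_ac)
  qed
  moreover have "val (q * tQ) = pval Q + pval Q"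
    using nonzero PQ lowest_coeff_nonzero
    by (simp add: val_mult q_def tQ_def val_of_poly2 val_laurent_monom)
  ultimately have "val_ge (f - t) (pval P + pval Q + (0, 1) - (pval Q + pval Q))"
    using val_ge_divide nonzero by (metis mult_eq_0_iff)
  then show thesis
    using nonzero by (intro that) (simp_all add: t_def val_f algebra_simps)
qed

definition derivation :: "('a::ring \<Rightarrow> 'a) \<Rightarrow> bool" where
  "derivation d \<longleftrightarrow> (\<forall>a b. d (a + b) = d a + d b) \<and> (\<forall>a b. d (a * b) = a * d b + d a * b)"

lemma derivation_add: "derivation d \<Longrightarrow> d (a + b) = d a + d b"
  by (simp add: derivation_def)

lemma derivation_mult: "derivation d \<Longrightarrow> d (a * b) = a * d b + d a * b"
  by (simp add: derivation_def)

lemma derivation_0: "derivation d \<Longrightarrow> d 0 = 0"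
  using derivation_add[of d 0 0] by simp

lemma derivation_1: "derivation d \<Longrightarrow> d (1 :: 'a::ring_1) = 0"
  using derivation_mult[of d 1 1] by simp

lemma derivation_sum: "derivation d \<Longrightarrow> d (sum f A) = (\<Sum>x\<in>A. d (f x))"
  by (induct A rule: infinite_finite_induct) (simp_all add: derivation_0 derivation_add)

lemma derivation_power: "derivation d \<Longrightarrow> d a = 0 \<Longrightarrow> d (a ^ n) = (0 :: 'a::ring_1)"
  by (induct n) (simp_all add: derivation_1 derivation_mult)

lemma derivation_diff_fun:
  "derivation d \<Longrightarrow> derivation e \<Longrightarrow> derivation (\<lambda>x. d x - e x)"
  by (simp add: derivation_def algebra_simps)

lemma derivation_divide:
  fixes a b :: "'a::field"
  assumes "derivation d" "b \<noteq> 0"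
  shows "d (a / b) = (d a - a / b * d b) / b"
proof -
  have "d a = d (a / b * b)"
    using assms(2) by simp
  also have "\<dots> = a / b * d b + d (a / b) * b"
    using assms(1) by (rule derivation_mult)
  finally show ?thesis
    using assms(2) by (simp add: field_simps)
qed

lemma derivation_eq_0:
  fixes d :: "'a::field ratfun2 \<Rightarrow> 'a ratfun2"
  assumes d: "derivation d" and "\<And>c. d (kconst c) = 0" "d X1 = 0" "d X2 = 0"
  shows "d f = 0"
proof -
  have "d (laurent_monom c (int_pair x)) = 0" for c x
    using assms by (simp add: laurent_monom_def int_pair_def derivation_mult derivation_power)
  then have poly: "d (of_poly2 P) = 0" for P
    by (simp add: of_poly2_eq_sum_laurent_monom derivation_sum[OF d])
  obtain P Q where "f = of_poly2 P / of_poly2 Q" "Q \<noteq> 0"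
    by (cases f) (auto simp: Fract_eq_of_poly2_divide)
  then show ?thesis
    by (simp add: derivation_divide[OF d] poly)
qed

lemma val_ge_derivation:
  fixes d :: "'a::field ratfun2 \<Rightarrow> 'a ratfun2"
  assumes d: "derivation d" and poly: "\<And>P. P \<noteq> 0 \<Longrightarrow> val_ge (d (of_poly2 P)) (pval P + s)"
    and "f \<noteq> 0"
  shows "val_ge (d f) (val f + s)"
proof -
  obtain P Q where PQ: "f = of_poly2 P / of_poly2 Q" "P \<noteq> 0" "Q \<noteq> 0"
    using assms(3) by (cases f rule: Fract_cases_nonzero) (auto simp: Fract_eq_of_poly2_divide)
  have val_f: "val f = pval P - pval Q"
    using PQ by (simp add: val_divide val_of_poly2)
  have "val_ge (f * d (of_poly2 Q)) (val f + (pval Q + s))"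
    by (intro val_ge_mult val_ge_val poly PQ)
  then have "val_ge (d (of_poly2 P) - f * d (of_poly2 Q)) (pval P + s)"
    by (intro val_ge_diff poly PQ) (simp add: val_f algebra_simps)
  then have "val_ge ((d (of_poly2 P) - f * d (of_poly2 Q)) / of_poly2 Q) (pval P + s - pval Q)"
    using PQ val_ge_divide by (metis of_poly2_eq_0_iff val_of_poly2)
  moreover have "d f = (d (of_poly2 P) - f * d (of_poly2 Q)) / of_poly2 Q"
    unfolding PQ(1) using PQ(3) by (simp add: derivation_divide[OF d])
  ultimately show ?thesis
    by (simp add: val_f algebra_simps)
qed

context
  fixes B :: "'a::field ratfun2 \<Rightarrow> 'a ratfun2 \<Rightarrow> 'a ratfun2"
  assumes B: "poisson_bracket B"
begin

lemma poisson_antisym: "B a b = - B b a"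
  using B unfolding poisson_bracket_def by blast

lemma poisson_smult: "B (kconst r * a) b = kconst r * B a b"
  using B unfolding poisson_bracket_def by blast

lemma poisson_jacobi: "B a (B b c) + B b (B c a) + B c (B a b) = 0"
  using B unfolding poisson_bracket_def by blast

lemma derivation_poisson_left: "derivation (\<lambda>a. B a c)"
  using B unfolding poisson_bracket_def derivation_def by blast

lemma derivation_poisson_right: "derivation (B c)"
  unfolding derivation_def
proof (intro conjI allI)
  fix a b
  show "B c (a + b) = B c a + B c b"
    by (subst (1 2 3) poisson_antisym) (simp add: derivation_add[OF derivation_poisson_left])
  show "B c (a * b) = a * B c b + B c a * b"
    by (subst (1 2 3) poisson_antisym) (simp add: derivation_mult[OF derivation_poisson_left])
qed

lemmas poisson_add_left = derivation_add[OF derivation_poisson_left]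
lemmas poisson_add_right = derivation_add[OF derivation_poisson_right]

lemma poisson_kconst_left [simp]: "B (kconst r) c = 0"
  using poisson_smult[of r 1 c] derivation_1[OF derivation_poisson_left] by simp

end

lemma poisson_self [simp]:
  fixes B :: "'a::field_char_0 ratfun2 \<Rightarrow> 'a ratfun2 \<Rightarrow> 'a ratfun2"
  assumes B: "poisson_bracket B"
  shows "B a a = 0"
proof -
  have "B a a + B a a = 0"
    using poisson_antisym[OF B, of a a] by (simp only: eq_neg_iff_add_eq_0)
  then have "kconst (2::'a) * B a a = 0"
    using kconst_add[of "1::'a" 1] by simp
  moreover have "kconst (2::'a) \<noteq> 0"
    by simp
  ultimately show ?thesis
    by (metis mult_eq_0_iff)
qed

lemma poisson_bracket_unique:
  fixes B1 B2 :: "'a::field_char_0 ratfun2 \<Rightarrow> 'a ratfun2 \<Rightarrow> 'a ratfun2"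
  assumes B1: "poisson_bracket B1" and B2: "poisson_bracket B2" and "B1 X1 X2 = B2 X1 X2"
  shows "B1 = B2"
proof -
  define D where "D a b = B1 a b - B2 a b" for a b
  have D_left: "derivation (\<lambda>a. D a c)" for c
    unfolding D_def by (intro derivation_diff_fun derivation_poisson_left B1 B2)
  have D_right: "derivation (D c)" for c
    unfolding D_def by (intro derivation_diff_fun derivation_poisson_right B1 B2)
  have D_antisym: "D a b = - D b a" for a b
    using poisson_antisym[OF B1, of a b] poisson_antisym[OF B2, of a b] by (simp add: D_def)
  have D_kconst: "D (kconst c) b = 0" for c b
    using B1 B2 by (simp add: D_def)
  have D_X: "D X1 X2 = 0" "D X2 X1 = 0" "D X1 X1 = 0" "D X2 X2 = 0"
    using assms D_antisym[of X2 X1] by (simp_all add: D_def)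
  have D_kconst_right: "D f (kconst c) = 0" for f c
    using D_antisym[of f "kconst c"] by (simp add: D_kconst)
  have D_X_right: "D f X1 = 0" "D f X2 = 0" for f
    by (rule derivation_eq_0[OF D_left]; simp add: D_kconst D_X)+
  have "D f g = 0" for f g
    by (rule derivation_eq_0[OF D_right]) (simp_all add: D_kconst_right D_X_right)
  then show ?thesis
    by (intro ext) (simp add: D_def)
qed

lemma poisson_iso_inv:
  assumes "poisson_iso B C \<phi>"
  shows "poisson_iso C B (inv \<phi>)"
proof -
  have bij: "bij \<phi>" and add: "\<And>a b. \<phi> (a + b) = \<phi> a + \<phi> b"
    and mult: "\<And>a b. \<phi> (a * b) = \<phi> a * \<phi> b" and one: "\<phi> 1 = 1"
    and smult: "\<And>r a. \<phi> (kconst r * a) = kconst r * \<phi> a"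
    and bracket: "\<And>a b. \<phi> (B a b) = C (\<phi> a) (\<phi> b)"
    using assms by (auto simp: poisson_iso_def)
  have r: "\<phi> (inv \<phi> x) = x" and l: "inv \<phi> (\<phi> x) = x" for x
    using bij by (simp_all add: bij_is_surj surj_f_inv_f bij_is_inj)
  have "inv \<phi> (a + b) = inv \<phi> a + inv \<phi> b" "inv \<phi> (a * b) = inv \<phi> a * inv \<phi> b"
    "inv \<phi> (kconst r * a) = kconst r * inv \<phi> a" "inv \<phi> (C a b) = B (inv \<phi> a) (inv \<phi> b)"
    for a b r
    by (metis add l r, metis mult l r, metis smult l r, metis bracket l r)
  moreover have "inv \<phi> 1 = 1"
    by (metis one l)
  ultimately show ?thesis
    using bij_imp_bij_inv[OF bij] by (simp add: poisson_iso_def)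
qed

section \<open>Log-canonical brackets\<close>

text \<open>\<open>log_bracket B f g\<close> plays the role of \<open>{log f, log g}\<close>: by the Leibniz rule it is additive
  in each argument with respect to multiplication.\<close>

definition log_bracket ::
  "('a::field ratfun2 \<Rightarrow> 'a ratfun2 \<Rightarrow> 'a ratfun2) \<Rightarrow> 'a ratfun2 \<Rightarrow> 'a ratfun2 \<Rightarrow> 'a ratfun2" where
  "log_bracket B f g = B f g / (f * g)"

context
  fixes B :: "'a::field_char_0 ratfun2 \<Rightarrow> 'a ratfun2 \<Rightarrow> 'a ratfun2"
  assumes B: "poisson_bracket B"
begin

lemma log_bracket_antisym: "log_bracket B f g = - log_bracket B g f"
  unfolding log_bracket_def by (subst poisson_antisym[OF B]) (simp add: mult.commute)

lemma log_bracket_mult_left: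
  "a \<noteq> 0 \<Longrightarrow> b \<noteq> 0 \<Longrightarrow> g \<noteq> 0 \<Longrightarrow>
    log_bracket B (a * b) g = log_bracket B a g + log_bracket B b g"
  by (simp add: log_bracket_def derivation_mult[OF derivation_poisson_left[OF B]] field_simps)

lemma log_bracket_power_int_left:
  assumes "a \<noteq> 0" "g \<noteq> 0"
  shows "log_bracket B (a powi n) g = of_int n * log_bracket B a g"
proof -
  have one: "log_bracket B 1 g = 0"
    by (simp add: log_bracket_def derivation_1[OF derivation_poisson_left[OF B]])
  have power: "log_bracket B (a ^ k) g = of_nat k * log_bracket B a g" for k
    using assms by (induct k) (simp_all add: one log_bracket_mult_left algebra_simps)
  have inverse: "log_bracket B (inverse x) g = - log_bracket B x g" if "x \<noteq> 0" for x
  proof -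
    have "log_bracket B x g + log_bracket B (inverse x) g = log_bracket B (x * inverse x) g"
      using that assms log_bracket_mult_left[of x "inverse x" g] by simp
    also have "\<dots> = 0"
      using that by (simp add: one)
    finally show ?thesis
      by (simp add: eq_neg_iff_add_eq_0 add.commute)
  qed
  show ?thesis
  proof (cases n rule: int_cases)
    case (neg k)
    have "log_bracket B (a powi n) g = log_bracket B (inverse (a ^ Suc k)) g"
      by (simp only: neg power_int_minus power_int_of_nat)
    also have "\<dots> = - log_bracket B (a ^ Suc k) g"
      using assms by (intro inverse) simp
    also have "\<dots> = of_int n * log_bracket B a g"
      by (simp only: power neg) (simp add: algebra_simps)
    finally show ?thesis .
  qed (simp add: power)
qed

lemma log_bracket_laurent_monom_left:
  assumes "c \<noteq> 0" "g \<noteq> 0"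
  shows "log_bracket B (laurent_monom c w) g
    = of_int (snd w) * log_bracket B X1 g + of_int (fst w) * log_bracket B X2 g"
  using assms
  by (simp add: laurent_monom_def log_bracket_mult_left log_bracket_power_int_left)
    (simp add: log_bracket_def poisson_kconst_left[OF B])

end

context
  fixes B :: "'a::field_char_0 ratfun2 \<Rightarrow> 'a ratfun2 \<Rightarrow> 'a ratfun2" and m :: 'a
  assumes B: "poisson_bracket B" and B_X1_X2: "B X1 X2 = kconst m * X1 * X2"
begin

lemma log_bracket_laurent_monom:
  assumes "c \<noteq> 0" "d \<noteq> 0"
  shows "log_bracket B (laurent_monom c v) (laurent_monom d w)
    = kconst m * of_int (snd v * fst w - fst v * snd w)"
proof -
  have X: "log_bracket B X1 X2 = kconst m" "log_bracket B X2 X1 = - kconst m"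
    "log_bracket B X1 X1 = 0" "log_bracket B X2 X2 = 0"
    using log_bracket_antisym[OF B, of X2 X1] B_X1_X2 B by (simp_all add: log_bracket_def)
  have "log_bracket B X1 (laurent_monom d w) = of_int (fst w) * kconst m"
    "log_bracket B X2 (laurent_monom d w) = - (of_int (snd w) * kconst m)"
    using log_bracket_laurent_monom_left[OF B assms(2)]
      log_bracket_antisym[OF B, of X1 "laurent_monom d w"]
      log_bracket_antisym[OF B, of X2 "laurent_monom d w"]
    by (simp_all add: X)
  then show ?thesis
    using assms by (simp add: log_bracket_laurent_monom_left[OF B] algebra_simps)
qed

lemma poisson_laurent_monom:
  "B (laurent_monom c v) (laurent_monom d w)
    = laurent_monom (m * of_int (snd v * fst w - fst v * snd w) * c * d) (v + w)"
proof (cases "c = 0 \<or> d = 0")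
  case True
  then show ?thesis
    by (auto simp: derivation_0[OF derivation_poisson_left[OF B]]
        derivation_0[OF derivation_poisson_right[OF B]])
next
  case False
  let ?x = "laurent_monom c v" and ?y = "laurent_monom d w"
  have "B ?x ?y = log_bracket B ?x ?y * (?x * ?y)"
    using False by (simp add: log_bracket_def)
  also have "\<dots> = kconst (m * of_int (snd v * fst w - fst v * snd w)) * (?x * ?y)"
    by (subst log_bracket_laurent_monom) (use False in blast, use False in blast,
        simp only: kconst_mult kconst_of_int)
  finally show ?thesis
    by (simp add: laurent_monom_mult kconst_mult_laurent_monom mult.assoc)
qed

lemma val_ge_poisson_of_poly2: "val_ge (B (of_poly2 P) (of_poly2 R)) (pval P + pval R)"
  unfolding of_poly2_eq_sum_laurent_monom[of P] of_poly2_eq_sum_laurent_monom[of R]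
    derivation_sum[OF derivation_poisson_left[OF B]] derivation_sum[OF derivation_poisson_right[OF B]]
proof (intro val_ge_sum)
  fix x y assume "x \<in> support2 P" "y \<in> support2 R"
  then have "pval P + pval R \<le> int_pair x + int_pair y"
    by (intro lex_add_mono) (simp_all add: pval_def lowest_exp_le)
  then show "val_ge (B (laurent_monom (coeff2 P x) (int_pair x)) (laurent_monom (coeff2 R y) (int_pair y)))
      (pval P + pval R)"
    by (simp add: poisson_laurent_monom val_ge_mono[OF val_ge_laurent_monom])
qed

lemma val_ge_poisson:
  assumes "val_ge f a" "val_ge g b"
  shows "val_ge (B f g) (a + b)"
proof (cases "f = 0 \<or> g = 0")
  case True
  then show ?thesis
    by (auto simp: derivation_0[OF derivation_poisson_left[OF B]]
        derivation_0[OF derivation_poisson_right[OF B]])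
next
  case False
  have poly_left: "val_ge (B (of_poly2 P) g) (pval P + val g)" if "P \<noteq> 0" for P
  proof -
    have "val_ge (B (of_poly2 P) g) (val g + pval P)"
      by (rule val_ge_derivation[OF derivation_poisson_right[OF B]])
        (metis add.commute val_ge_poisson_of_poly2, use False in simp)
    then show ?thesis
      by (simp add: add.commute)
  qed
  have "val_ge (B f g) (val f + val g)"
    by (rule val_ge_derivation[OF derivation_poisson_left[OF B], OF poly_left]) (use False in simp_all)
  moreover have "a + b \<le> val f + val g"
    using assms False by (intro lex_add_mono) (simp_all add: val_ge_def)
  ultimately show ?thesis
    by (rule val_ge_mono)
qed

lemma val_ge_poisson_scalar_defect_diff:
  assumes t: "val_ge t a" and s: "val_ge s b"
    and r: "val_ge (u - t) (a + (0, 1))" and r': "val_ge (v - s) (b + (0, 1))"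
  shows "val_ge ((B u v - kconst l * u * v) - (B t s - kconst l * (t * s))) (a + b + (0, 1))"
proof -
  define r r' where "r = u - t" and "r' = v - s"
  note r = r[folded r_def] and r' = r'[folded r'_def]
  have w_eq: "a + (b + (0, 1)) = a + b + (0, 1)" "a + (0, 1) + b = a + b + (0, 1)"
    by (simp_all add: add_ac)
  have w_le: "a + b + (0, 1) \<le> a + (0, 1) + (b + (0, 1))"
    by (cases a; cases b) auto
  have "val_ge (B t r') (a + b + (0, 1))" "val_ge (B r s) (a + b + (0, 1))"
    "val_ge (B r r') (a + b + (0, 1))"
    using val_ge_poisson[OF t r'] val_ge_poisson[OF r s] val_ge_mono[OF val_ge_poisson[OF r r'] w_le]
    by (simp_all only: w_eq)
  moreover have "val_ge (t * r' + r * s + r * r') (a + b + (0, 1))"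
    using val_ge_mult[OF t r'] val_ge_mult[OF r s] val_ge_mono[OF val_ge_mult[OF r r'] w_le]
    by (intro val_ge_add) (simp_all only: w_eq)
  then have "val_ge (kconst l * (t * r' + r * s + r * r')) (a + b + (0, 1))"
    using val_ge_mult[OF val_ge_laurent_monom[of l 0]] by (simp add: kconst_eq_laurent_monom)
  ultimately have "val_ge (B t r' + B r s + B r r' - kconst l * (t * r' + r * s + r * r')) (a + b + (0, 1))"
    by (intro val_ge_diff val_ge_add)
  moreover have "B u v = B (t + r) (s + r')" "kconst l * u * v = kconst l * ((t + r) * (s + r'))"
    by (simp_all add: r_def r'_def)
  ultimately show ?thesis
    by (simp add: poisson_add_left[OF B] poisson_add_right[OF B] algebra_simps)
qed

text \<open>The lowest term of \<open>B u v - l u v\<close> is \<open>(m N - l) t s\<close>, where \<open>t\<close>, \<open>s\<close> are the lowest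
  Laurent monomials of \<open>u\<close>, \<open>v\<close> and \<open>N\<close> is the determinant of their exponents.\<close>

lemma poisson_eq_scalar_imp_int_multiple:
  assumes u: "u \<noteq> 0" and v: "v \<noteq> 0" and uv: "B u v = kconst l * u * v"
  shows "l = m * of_int (snd (val u) * fst (val v) - fst (val u) * snd (val v))"
    (is "l = m * of_int ?N")
proof (rule ccontr)
  assume l: "l \<noteq> m * of_int ?N"
  obtain c where c: "c \<noteq> 0" "val_ge (u - laurent_monom c (val u)) (val u + (0, 1))"
    using val_ge_diff_lowest_laurent_monom[OF u] .
  obtain d where d: "d \<noteq> 0" "val_ge (v - laurent_monom d (val v)) (val v + (0, 1))"
    using val_ge_diff_lowest_laurent_monom[OF v] .
  define t s where "t = laurent_monom c (val u)" and "s = laurent_monom d (val v)"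
  define E where "E = kconst l * (t * s) - B t s"
  have "E = laurent_monom ((l - m * of_int ?N) * (c * d)) (val u + val v)"
    by (simp add: E_def t_def s_def poisson_laurent_monom laurent_monom_mult kconst_mult_laurent_monom
        laurent_monom_diff algebra_simps)
  moreover have "val_ge E (val u + val v + (0, 1))"
    using val_ge_poisson_scalar_defect_diff[of t "val u" s "val v" u v l] c d uv
    by (simp add: E_def t_def s_def val_ge_laurent_monom)
  ultimately show False
    using not_val_ge_succ[of E] l c d by (simp add: val_laurent_monom)
qed

end

section \<open>Exchanging the variables\<close>

definition swap_poly2 :: "'a::comm_ring_1 poly poly \<Rightarrow> 'a poly poly" where
  "swap_poly2 P = (\<Sum>x\<in>support2 P. monom2 (coeff2 P x) (prod.swap x))"

lemma coeff2_swap_poly2 [simp]: "coeff2 (swap_poly2 P) x = coeff2 P (prod.swap x)"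
proof -
  have "coeff2 (swap_poly2 P) x = (\<Sum>y\<in>support2 P. if y = prod.swap x then coeff2 P y else 0)"
    unfolding swap_poly2_def coeff2_sum by (intro sum.cong) (auto simp: coeff2_monom2)
  also have "\<dots> = coeff2 P (prod.swap x)"
    using finite_support2[of P] by (simp add: support2_def)
  finally show ?thesis .
qed

lemma swap_poly2_swap_poly2 [simp]: "swap_poly2 (swap_poly2 P) = P"
  by (rule poly2_eqI) simp

lemma swap_poly2_add: "swap_poly2 (P + Q) = swap_poly2 P + swap_poly2 Q"
  by (rule poly2_eqI) simp

lemma swap_poly2_mult: "swap_poly2 (P * Q) = swap_poly2 P * swap_poly2 Q"
proof (rule poly2_eqI)
  fix x :: "nat \<times> nat"
  have swap_diff: "prod.swap (x - prod.swap z) = prod.swap x - z" for z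
    by (cases x; cases z) simp
  have "coeff2 (swap_poly2 P * swap_poly2 Q) x
      = (\<Sum>y\<in>prod.swap ` ({..snd x} \<times> {..fst x}). coeff2 P (prod.swap y) * coeff2 Q (prod.swap (x - y)))"
    by (simp add: coeff2_mult product_swap)
  also have "\<dots> = (\<Sum>z\<in>{..snd x} \<times> {..fst x}. coeff2 P z * coeff2 Q (prod.swap x - z))"
    by (subst sum.reindex) (simp_all add: swap_diff)
  also have "\<dots> = coeff2 (swap_poly2 (P * Q)) x"
    by (simp add: coeff2_mult)
  finally show "coeff2 (swap_poly2 (P * Q)) x = coeff2 (swap_poly2 P * swap_poly2 Q) x" ..
qed

lemma swap_poly2_eq_0_iff [simp]: "swap_poly2 P = 0 \<longleftrightarrow> P = 0"
  by (metis coeff2_0 coeff2_swap_poly2 poly2_eqI swap_poly2_swap_poly2)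

lemma swap_poly2_monom2: "swap_poly2 (monom2 c x) = monom2 c (prod.swap x)"
  by (rule poly2_eqI) (auto simp: coeff2_monom2)

definition swap_ratfun :: "'a::idom ratfun2 \<Rightarrow> 'a ratfun2" where
  "swap_ratfun f = (let pq = (SOME pq. snd pq \<noteq> 0 \<and> f = Fract (fst pq) (snd pq))
     in Fract (swap_poly2 (fst pq)) (swap_poly2 (snd pq)))"

lemma swap_ratfun_Fract:
  assumes "Q \<noteq> 0"
  shows "swap_ratfun (Fract P Q) = Fract (swap_poly2 P) (swap_poly2 Q)"
proof -
  define pq where "pq = (SOME pq. snd pq \<noteq> 0 \<and> Fract P Q = Fract (fst pq) (snd pq))"
  have "snd pq \<noteq> 0 \<and> Fract P Q = Fract (fst pq) (snd pq)"
    unfolding pq_def by (rule someI[of _ "(P, Q)"]) (simp add: assms)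
  then have "snd pq \<noteq> 0" "P * snd pq = fst pq * Q"
    using assms by (auto simp: eq_fract)
  then have "Fract (swap_poly2 (fst pq)) (swap_poly2 (snd pq)) = Fract (swap_poly2 P) (swap_poly2 Q)"
    using assms by (simp add: eq_fract flip: swap_poly2_mult)
  then show ?thesis
    by (simp add: swap_ratfun_def flip: pq_def)
qed

lemma swap_ratfun_add: "swap_ratfun (f + g) = swap_ratfun f + swap_ratfun g"
  by (cases f; cases g) (simp add: swap_ratfun_Fract swap_poly2_add swap_poly2_mult)

lemma swap_ratfun_mult: "swap_ratfun (f * g) = swap_ratfun f * swap_ratfun g"
  by (cases f; cases g) (simp add: swap_ratfun_Fract swap_poly2_mult)

lemma swap_ratfun_swap_ratfun [simp]: "swap_ratfun (swap_ratfun f) = f"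
  by (cases f) (simp add: swap_ratfun_Fract)

lemma bij_swap_ratfun: "bij swap_ratfun"
  by (rule o_bij[of swap_ratfun]) (simp_all add: fun_eq_iff)

lemma swap_ratfun_of_poly2: "swap_ratfun (of_poly2 P) = of_poly2 (swap_poly2 P)"
  using swap_poly2_monom2[of "1::'a" "(0, 0)"]
  by (simp add: of_poly2_def swap_ratfun_Fract monom2_1_0)

lemma swap_ratfun_laurent_monom_nat:
  "swap_ratfun (laurent_monom c (int_pair x)) = laurent_monom c (int_pair (prod.swap x))"
  by (simp add: swap_ratfun_of_poly2 swap_poly2_monom2 flip: of_poly2_monom2)

lemma swap_ratfun_kconst: "swap_ratfun (kconst c) = kconst c"
  using swap_ratfun_laurent_monom_nat[of c "(0, 0)"] by (simp add: laurent_monom_def int_pair_def)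

lemma swap_ratfun_minus: "swap_ratfun (- f) = - swap_ratfun (f :: 'a::idom ratfun2)"
proof -
  have "swap_ratfun (- 1 :: 'a ratfun2) = - 1"
    using swap_ratfun_kconst[of "- 1 :: 'a"] by (simp add: kconst_minus)
  then show ?thesis
    using swap_ratfun_mult[of "- 1" f] by simp
qed

lemma swap_ratfun_X1: "swap_ratfun X1 = X2"
  using swap_ratfun_laurent_monom_nat[of 1 "(0, 1)"] by (simp add: laurent_monom_def int_pair_def)

lemma swap_ratfun_X2: "swap_ratfun X2 = X1"
  using swap_ratfun_laurent_monom_nat[of 1 "(1, 0)"] by (simp add: laurent_monom_def int_pair_def)

lemma poisson_bracket_conj:
  fixes B :: "'a::field ratfun2 \<Rightarrow> 'a ratfun2 \<Rightarrow> 'a ratfun2"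
  assumes B: "poisson_bracket B"
    and add: "\<And>a b. \<sigma> (a + b) = \<sigma> a + \<sigma> b" and mult: "\<And>a b. \<sigma> (a * b) = \<sigma> a * \<sigma> b"
    and smult: "\<And>r a. \<sigma> (kconst r * a) = kconst r * \<sigma> a" and involution: "\<And>a. \<sigma> (\<sigma> a) = a"
  shows "poisson_bracket (\<lambda>a b. \<sigma> (B (\<sigma> a) (\<sigma> b)))"
proof -
  have zero: "\<sigma> 0 = 0"
    using add[of 0 0] by (metis add_0 add_cancel_right_right)
  have minus: "\<sigma> (- a) = - \<sigma> a" for a
    using add[of a "- a"] zero by (simp add: eq_neg_iff_add_eq_0 add.commute)
  show ?thesis
    unfolding poisson_bracket_def
  proof (intro conjI allI)
    fix a b c r
    show "\<sigma> (B (\<sigma> (a + b)) (\<sigma> c)) = \<sigma> (B (\<sigma> a) (\<sigma> c)) + \<sigma> (B (\<sigma> b) (\<sigma> c))"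
      by (simp add: add poisson_add_left[OF B])
    show "\<sigma> (B (\<sigma> (kconst r * a)) (\<sigma> b)) = kconst r * \<sigma> (B (\<sigma> a) (\<sigma> b))"
      by (simp add: smult poisson_smult[OF B])
    show "\<sigma> (B (\<sigma> a) (\<sigma> b)) = - \<sigma> (B (\<sigma> b) (\<sigma> a))"
      by (subst poisson_antisym[OF B]) (simp add: minus)
    show "\<sigma> (B (\<sigma> (a * b)) (\<sigma> c)) = a * \<sigma> (B (\<sigma> b) (\<sigma> c)) + \<sigma> (B (\<sigma> a) (\<sigma> c)) * b"
      by (simp add: mult add involution derivation_mult[OF derivation_poisson_left[OF B]])
    show "\<sigma> (B (\<sigma> a) (\<sigma> (\<sigma> (B (\<sigma> b) (\<sigma> c))))) + \<sigma> (B (\<sigma> b) (\<sigma> (\<sigma> (B (\<sigma> c) (\<sigma> a)))))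
        + \<sigma> (B (\<sigma> c) (\<sigma> (\<sigma> (B (\<sigma> a) (\<sigma> b))))) = 0"
      by (simp add: involution zero poisson_jacobi[OF B] flip: add)
  qed
qed

lemma poisson_iso_swap_ratfun:
  fixes Bl Bm :: "'a::field_char_0 ratfun2 \<Rightarrow> 'a ratfun2 \<Rightarrow> 'a ratfun2"
  assumes l: "quantum_bracket (- m) Bl" and m: "quantum_bracket m Bm"
  shows "poisson_iso Bl Bm swap_ratfun"
proof -
  have Bm: "poisson_bracket Bm"
    using m by (simp add: quantum_bracket_def)
  define C where "C a b = swap_ratfun (Bm (swap_ratfun a) (swap_ratfun b))" for a b
  have "poisson_bracket C"
    unfolding C_def using Bm
    by (rule poisson_bracket_conj)
      (simp_all add: swap_ratfun_add swap_ratfun_mult swap_ratfun_kconst)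
  moreover have "C X1 X2 = kconst (- m) * X1 * X2"
    using m poisson_antisym[OF Bm, of X2 X1]
    by (simp add: C_def quantum_bracket_def swap_ratfun_X1 swap_ratfun_X2 swap_ratfun_mult
        swap_ratfun_kconst swap_ratfun_minus kconst_minus)
  ultimately have "Bl = C"
    using l by (auto simp: quantum_bracket_def intro: poisson_bracket_unique)
  then have "swap_ratfun (Bl a b) = Bm (swap_ratfun a) (swap_ratfun b)" for a b
    by (simp add: C_def)
  moreover have "swap_ratfun 1 = 1"
    using swap_ratfun_kconst[of 1] by simp
  ultimately show ?thesis
    by (simp add: poisson_iso_def bij_swap_ratfun swap_ratfun_add swap_ratfun_mult swap_ratfun_kconst)
qed

lemma poisson_iso_imp_int_multiple:
  fixes Bl Bm :: "'a::field_char_0 ratfun2 \<Rightarrow> 'a ratfun2 \<Rightarrow> 'a ratfun2"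
  assumes l: "quantum_bracket l Bl" and m: "quantum_bracket m Bm" and \<phi>: "poisson_iso Bl Bm \<phi>"
  shows "\<exists>N::int. l = m * of_int N"
proof -
  have inj: "inj \<phi>" and add: "\<And>a b. \<phi> (a + b) = \<phi> a + \<phi> b"
    and mult: "\<And>a b. \<phi> (a * b) = \<phi> a * \<phi> b" and smult: "\<And>r a. \<phi> (kconst r * a) = kconst r * \<phi> a"
    and bracket: "\<And>a b. \<phi> (Bl a b) = Bm (\<phi> a) (\<phi> b)"
    using \<phi> by (auto simp: poisson_iso_def bij_is_inj)
  have "\<phi> 0 = 0"
    using add[of 0 0] by (metis add_0 add_cancel_right_right)
  then have nonzero: "\<phi> X1 \<noteq> 0" "\<phi> X2 \<noteq> 0"
    using inj by (metis X1_nonzero X2_nonzero injD)+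
  have "Bm (\<phi> X1) (\<phi> X2) = \<phi> (Bl X1 X2)"
    by (simp add: bracket)
  also have "\<dots> = \<phi> (kconst l * (X1 * X2))"
    using l by (simp add: quantum_bracket_def mult.assoc)
  also have "\<dots> = kconst l * \<phi> X1 * \<phi> X2"
    by (subst smult) (simp add: mult mult.assoc)
  finally show ?thesis
    using m nonzero by (auto simp: quantum_bracket_def dest: poisson_eq_scalar_imp_int_multiple)
qed

lemma int_multiples_imp_eq_or_eq_neg:
  fixes l m :: "'a::{idom, ring_char_0}"
  assumes "l = m * of_int N" "m = l * of_int N'"
  shows "l = m \<or> l = - m"
proof (cases "l = 0")
  case False
  have "l = l * of_int (N' * N)"
    by (subst (1) assms(1), subst assms(2)) (simp add: mult.assoc)
  then have "of_int (N' * N) = (1 :: 'a)"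
    using False by (metis mult_cancel_left1)
  then have "N' * N = 1"
    by (simp only: of_int_eq_1_iff)
  then have "N = 1 \<or> N = - 1"
    by (auto simp: zmult_eq_1_iff)
  then show ?thesis
    using assms(1) by auto
qed (use assms(2) in simp)

theorem corollary5p4:
  fixes l m :: "'a::field_char_0"
    and Bl Bm :: "'a ratfun2 \<Rightarrow> 'a ratfun2 \<Rightarrow> 'a ratfun2"
  assumes "quantum_bracket l Bl" and "quantum_bracket m Bm"
  shows "(\<exists>\<phi>. poisson_iso Bl Bm \<phi>) \<longleftrightarrow> (l = m \<or> l = - m)"
proof
  assume "\<exists>\<phi>. poisson_iso Bl Bm \<phi>"
  then obtain \<phi> where \<phi>: "poisson_iso Bl Bm \<phi>" ..
  obtain N :: int where "l = m * of_int N"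
    using poisson_iso_imp_int_multiple[OF assms \<phi>] ..
  moreover obtain N' :: int where "m = l * of_int N'"
    using poisson_iso_imp_int_multiple[OF assms(2,1) poisson_iso_inv[OF \<phi>]] ..
  ultimately show "l = m \<or> l = - m"
    by (rule int_multiples_imp_eq_or_eq_neg)
next
  assume "l = m \<or> l = - m"
  then show "\<exists>\<phi>. poisson_iso Bl Bm \<phi>"
  proof
    assume "l = m"
    then have "Bl = Bm"
      using assms by (auto simp: quantum_bracket_def intro: poisson_bracket_unique)
    then have "poisson_iso Bl Bm id"
      by (simp add: poisson_iso_def)
    then show ?thesis
      by blast
  next
    assume "l = - m"
    then show ?thesis
      using poisson_iso_swap_ratfun assms by blast
  qed
qed

end
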